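(* Let $n\ge 1$ and let $\mathrm{metric}$ be a performance metric of the form $$\mathrm{metric}(\hat{\mathbf y},\mathbf y)=\sum_{j=1}^{J}\frac{a_j\,\mathrm{TP}+b_j\,\mathrm{TN}+f_j(\mathrm{PP},\mathrm{AP})}{g_j(\mathrm{PP},\mathrm{AP})},\qquad \hat{\mathbf y},\mathbf y\in\{0,1\}^n .$$ Let $\mathcal P$ and $\mathcal Q$ be arbitrary probability distributions on $\{0,1\}^n$, and let $\hat{\mathbf Y}\sim\mathcal P$ and $\check{\mathbf Y}\sim\mathcal Q$ be independent. Then $$\mathbb E_{\hat{\mathbf Y}\sim\mathcal P,\ \check{\mathbf Y}\sim\mathcal Q}\big[\mathrm{metric}(\hat{\mathbf Y},\check{\mathbf Y})\big]=\sum_{k=0}^{n}\sum_{l=0}^{n}\sum_{j=1}^{J}\frac{1}{g_j(k,l)}\Big\{a_j\,[\mathbf p_k^1\cdot\mathbf q_l^1]+b_j\,[\mathbf p_k^0\cdot\mathbf q_l^0]+f_j(k,l)\,r_k\,s_l\Big\}.$$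
   Context: For $\hat{\mathbf y},\mathbf y\in\{0,1\}^n$ (first argument = prediction, second = reference label): $\mathrm{TP}=\sum_i\hat y_iy_i$, $\mathrm{TN}=\sum_i(1-\hat y_i)(1-y_i)$, $\mathrm{PP}=\sum_i\hat y_i$, $\mathrm{AP}=\sum_i y_i$. In the metric, $a_j,b_j\in\mathbb R$ are constants and $f_j,g_j:\{0,\dots,n\}^2\to\mathbb R$ are functions with $g_j(k,l)\neq 0$ for all $k,l$. Marginal notation: for $a\in\{0,1\}$ and $k\in\{0,\dots,n\}$, $\mathbf p_k^a\in\mathbb R^n$ has entries $(\mathbf p_k^a)_i=\mathcal P(\hat Y_i=a,\ \sum_{i'}\hat Y_{i'}=k)$ and $r_k=\mathcal P(\sum_i\hat Y_i=k)$; similarly $(\mathbf q_l^a)_i=\mathcal Q(\check Y_i=a,\ \sum_{i'}\check Y_{i'}=l)$ and $s_l=\mathcal Q(\sum_i\check Y_i=l)$. The dot denotes the Euclidean inner product on $\mathbb R^n$. *)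

theory Defs
  imports "HOL-Probability.Probability"
begin

text \<open>Binary vectors in {0,1}^n are modelled as functions 'n \<Rightarrow> bool on a finite
  index type 'n with n = CARD('n); True encodes 1 and False encodes 0.\<close>

definition TP :: "('n::finite \<Rightarrow> bool) \<Rightarrow> ('n \<Rightarrow> bool) \<Rightarrow> nat" where
  "TP yh y = (\<Sum>i\<in>UNIV. of_bool (yh i) * of_bool (y i))"

definition TN :: "('n::finite \<Rightarrow> bool) \<Rightarrow> ('n \<Rightarrow> bool) \<Rightarrow> nat" where
  "TN yh y = (\<Sum>i\<in>UNIV. (1 - of_bool (yh i)) * (1 - of_bool (y i)))"

definition PP :: "('n::finite \<Rightarrow> bool) \<Rightarrow> ('n \<Rightarrow> bool) \<Rightarrow> nat" where
  "PP yh y = (\<Sum>i\<in>UNIV. of_bool (yh i))"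

definition AP :: "('n::finite \<Rightarrow> bool) \<Rightarrow> ('n \<Rightarrow> bool) \<Rightarrow> nat" where
  "AP yh y = (\<Sum>i\<in>UNIV. of_bool (y i))"

definition metric ::
  "nat \<Rightarrow> (nat \<Rightarrow> real) \<Rightarrow> (nat \<Rightarrow> real) \<Rightarrow> (nat \<Rightarrow> nat \<Rightarrow> nat \<Rightarrow> real) \<Rightarrow>
   (nat \<Rightarrow> nat \<Rightarrow> nat \<Rightarrow> real) \<Rightarrow> ('n::finite \<Rightarrow> bool) \<Rightarrow> ('n \<Rightarrow> bool) \<Rightarrow> real" where
  "metric J a b f g yh y =
     (\<Sum>j=1..J. (a j * real (TP yh y) + b j * real (TN yh y) + f j (PP yh y) (AP yh y))
                / g j (PP yh y) (AP yh y))"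

definition ones :: "('n::finite \<Rightarrow> bool) \<Rightarrow> nat" where
  "ones y = (\<Sum>i\<in>UNIV. of_bool (y i))"

definition marg :: "('n::finite \<Rightarrow> bool) pmf \<Rightarrow> bool \<Rightarrow> nat \<Rightarrow> 'n \<Rightarrow> real" where
  "marg P a k i = measure_pmf.prob P {y. y i = a \<and> ones y = k}"

definition cnt :: "('n::finite \<Rightarrow> bool) pmf \<Rightarrow> nat \<Rightarrow> real" where
  "cnt P k = measure_pmf.prob P {y. ones y = k}"

definition dotv :: "('n::finite \<Rightarrow> real) \<Rightarrow> ('n \<Rightarrow> real) \<Rightarrow> real" where
  "dotv u v = (\<Sum>i\<in>UNIV. u i * v i)"

end

theory Submission
  imports Defs
begin

text \<open>Splitting
  the metric by the levels k = PP = ones x and l = AP = ones y makes its denominators and f-terms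
  constant, so on each level it is affine in TP and TN. Since TP x y = sum_i [x_i][y_i] is a sum of
  products of a function of x and a function of y, its weighted sum over the independent pair
  factors into the inner product of the marginals p_k^1 and q_l^1; likewise for TN and p_k^0, q_l^0.\<close>

lemma prob_pmf_finite_eq_sum:
  "measure_pmf.prob (P :: 'a::finite pmf) {x. A x} = (\<Sum>x\<in>UNIV. of_bool (A x) * pmf P x)"
  by (simp add: measure_measure_pmf_finite sum.If_cases Collect_conv_if Int_def)

lemma sum_of_bool_delta:
  fixes h :: "'a \<Rightarrow> 'b::semiring_1"
  assumes "finite K" "v \<in> K"
  shows "(\<Sum>k\<in>K. of_bool (v = k) * h k) = h v"
  using assms by (simp add: sum.If_cases)

lemma sum_sum_of_products_factor:
  fixes c :: "'a \<Rightarrow> 'r::comm_semiring_0"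
  shows "(\<Sum>x\<in>A. \<Sum>y\<in>B. c x * d y * (\<Sum>i\<in>I. u x i * v y i)) =
    (\<Sum>i\<in>I. (\<Sum>x\<in>A. u x i * c x) * (\<Sum>y\<in>B. v y i * d y))"
proof -
  have "(\<Sum>x\<in>A. \<Sum>y\<in>B. c x * d y * (\<Sum>i\<in>I. u x i * v y i)) =
      (\<Sum>x\<in>A. \<Sum>y\<in>B. \<Sum>i\<in>I. (u x i * c x) * (v y i * d y))"
    by (simp add: sum_distrib_left mult_ac)
  also have "\<dots> = (\<Sum>i\<in>I. \<Sum>x\<in>A. \<Sum>y\<in>B. (u x i * c x) * (v y i * d y))"
    by (subst sum.swap, rule sum.cong[OF refl], rule sum.swap)
  also have "\<dots> = (\<Sum>i\<in>I. (\<Sum>x\<in>A. u x i * c x) * (\<Sum>y\<in>B. v y i * d y))"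
    by (simp add: sum_product)
  finally show ?thesis .
qed

lemma TP_eq_sum: "real (TP x y) = (\<Sum>i\<in>UNIV. of_bool (x i = True) * of_bool (y i = True))"
  unfolding TP_def of_nat_sum by (rule sum.cong) auto

lemma TN_eq_sum: "real (TN x y) = (\<Sum>i\<in>UNIV. of_bool (x i = False) * of_bool (y i = False))"
  unfolding TN_def of_nat_sum by (rule sum.cong) auto

lemma ones_le_CARD: "ones (x :: 'n::finite \<Rightarrow> bool) \<le> CARD('n)"
  unfolding ones_def by (simp add: card_mono)

lemma marg_eq_sum: "marg P a k i = (\<Sum>x\<in>UNIV. of_bool (x i = a) * (of_bool (ones x = k) * pmf P x))"
  unfolding marg_def prob_pmf_finite_eq_sum by (rule sum.cong) auto

lemma cnt_eq_sum: "cnt P k = (\<Sum>x\<in>UNIV. of_bool (ones x = k) * pmf P x)"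
  by (simp add: cnt_def prob_pmf_finite_eq_sum)

lemma dotv_marg_eq_sum:
  "dotv (marg P a k) (marg Q a l) =
    (\<Sum>x\<in>UNIV. \<Sum>y\<in>UNIV. (of_bool (ones x = k) * pmf P x) * (of_bool (ones y = l) * pmf Q y) *
      (\<Sum>i\<in>UNIV. of_bool (x i = a) * of_bool (y i = a)))"
  by (simp only: sum_sum_of_products_factor dotv_def marg_eq_sum)

lemma cnt_mult_cnt_eq_sum:
  "cnt P k * cnt Q l =
    (\<Sum>x\<in>UNIV. \<Sum>y\<in>UNIV. (of_bool (ones x = k) * pmf P x) * (of_bool (ones y = l) * pmf Q y))"
  by (simp only: cnt_eq_sum sum_product)

lemma metric_eq_sum_levels:
  fixes x y :: "'n::finite \<Rightarrow> bool"
  shows "metric J a b f g x y =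
    (\<Sum>k=0..CARD('n). \<Sum>l=0..CARD('n). of_bool (ones x = k) * of_bool (ones y = l) *
      (\<Sum>j=1..J. (a j * real (TP x y) + b j * real (TN x y) + f j k l) / g j k l))"
  by (simp add: sum_distrib_left[symmetric] mult.assoc sum_of_bool_delta ones_le_CARD
      metric_def PP_def AP_def ones_def[symmetric])

lemma expectation_pair_pmf_finite:
  fixes P :: "'a::finite pmf" and Q :: "'b::finite pmf"
  shows "measure_pmf.expectation (pair_pmf P Q) (\<lambda>(x, y). h x y) =
    (\<Sum>x\<in>UNIV. \<Sum>y\<in>UNIV. pmf P x * pmf Q y * h x y)"
proof -
  have "measure_pmf.expectation (pair_pmf P Q) (\<lambda>(x, y). h x y) =
      (\<Sum>z\<in>UNIV. (case z of (x, y) \<Rightarrow> h x y) * pmf (pair_pmf P Q) z)"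
    by (rule integral_measure_pmf_real) auto
  also have "\<dots> = (\<Sum>(x, y)\<in>UNIV \<times> UNIV. pmf P x * pmf Q y * h x y)"
    by (auto simp: pmf_pair mult_ac intro: sum.cong)
  finally show ?thesis
    by (simp add: sum.cartesian_product)
qed

lemma expectation_metric_level_term:
  fixes P Q :: "('n::finite \<Rightarrow> bool) pmf"
  shows "measure_pmf.expectation (pair_pmf P Q) (\<lambda>(x, y). of_bool (ones x = k) * of_bool (ones y = l) *
      ((\<alpha> * real (TP x y) + \<beta> * real (TN x y) + \<gamma>) / \<delta>)) =
    1 / \<delta> * (\<alpha> * dotv (marg P True k) (marg Q True l) + \<beta> * dotv (marg P False k) (marg Q False l)
      + \<gamma> * cnt P k * cnt Q l)"
proof -
  define w where "w R m z = of_bool (ones z = m) * pmf R z" for R :: "('n \<Rightarrow> bool) pmf" and m z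
  have "measure_pmf.expectation (pair_pmf P Q) (\<lambda>(x, y). of_bool (ones x = k) * of_bool (ones y = l) *
      ((\<alpha> * real (TP x y) + \<beta> * real (TN x y) + \<gamma>) / \<delta>)) =
    1 / \<delta> * (\<alpha> * (\<Sum>x\<in>UNIV. \<Sum>y\<in>UNIV. w P k x * w Q l y * real (TP x y))
      + \<beta> * (\<Sum>x\<in>UNIV. \<Sum>y\<in>UNIV. w P k x * w Q l y * real (TN x y))
      + \<gamma> * (\<Sum>x\<in>UNIV. \<Sum>y\<in>UNIV. w P k x * w Q l y))"
    by (simp add: expectation_pair_pmf_finite w_def sum.distrib sum_distrib_left algebra_simps
        divide_inverse)
  then show ?thesis
    by (simp add: w_def TP_eq_sum TN_eq_sum dotv_marg_eq_sum cnt_mult_cnt_eq_sum mult.assoc)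
qed

theorem theorem1:
  fixes J :: nat and a b :: "nat \<Rightarrow> real" and f g :: "nat \<Rightarrow> nat \<Rightarrow> nat \<Rightarrow> real"
    and P Q :: "('n::finite \<Rightarrow> bool) pmf"
  assumes "\<And>j k l. j \<in> {1..J} \<Longrightarrow> k \<le> CARD('n) \<Longrightarrow> l \<le> CARD('n) \<Longrightarrow> g j k l \<noteq> 0"
  shows "measure_pmf.expectation (pair_pmf P Q) (\<lambda>(yh, yc). metric J a b f g yh yc) =
    (\<Sum>k=0..CARD('n). \<Sum>l=0..CARD('n). \<Sum>j=1..J.
       (1 / g j k l) * (a j * dotv (marg P True k) (marg Q True l)
                       + b j * dotv (marg P False k) (marg Q False l)
                       + f j k l * cnt P k * cnt Q l))"
proof -
  have "measure_pmf.expectation (pair_pmf P Q) (\<lambda>(yh, yc). metric J a b f g yh yc) =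
    (\<Sum>k=0..CARD('n). \<Sum>l=0..CARD('n). \<Sum>j=1..J. measure_pmf.expectation (pair_pmf P Q)
      (\<lambda>(x, y). of_bool (ones x = k) * of_bool (ones y = l) *
        ((a j * real (TP x y) + b j * real (TN x y) + f j k l) / g j k l)))"
    by (simp add: metric_eq_sum_levels sum_distrib_left case_prod_unfold integral_sum
        integrable_measure_pmf_finite)
  then show ?thesis
    by (simp only: expectation_metric_level_term)
qed

end
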